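(* Let $p,n\in\mathbb{N}$ with $p,n\ge1$, $r\in\mathbb{N}$ with $r\le p$, and assume $n\ge\max\{p+1,\;p+\lfloor p/2\rfloor\}$. Then $$X^{p,r,2}=\Big(\frac{2n+1}{2}\Big)^{2r-1}\big(T_n^{\bm\alpha}+H_n^{\bm\alpha,2,1}\big),$$ where $\alpha_k=(-1)^r\mathcal{N}_{2p+1}^{(2r)}(p+1-k)$, $k=0,\dots,p$.
   Context: Cardinal B-spline: $\mathcal{N}_0(t)=1$ for $t\in[0,1)$, $0$ otherwise; $\mathcal{N}_p(t)=\frac{t}{p}\mathcal{N}_{p-1}(t)+\frac{p+1-t}{p}\mathcal{N}_{p-1}(t-1)$, $p\ge1$ (support $[0,p+1]$, $C^{p-1}$). Mixed basis: for $c\in\mathbb{R}$ put $D_c(x)=\mathcal{N}_p\big(\tfrac{2n+1}{2}x-c+\tfrac{p+1}{2}\big)$ (B-spline centred at $2c/(2n+1)$), and for $i=1,\dots,n$, $x\in[0,1]$, $$N^p_{i,2}(x)=\sum_{m\in\mathbb{Z}}(-1)^m\Big(D_{i+m(2n+1)}(x)-D_{-i+m(2n+1)}(x)\Big).$$ These form a basis of the $C^{p-1}$ splines of degree $p$ with breakpoints $2k/(2n+1)$ ($p$ odd) or $(2k+1)/(2n+1)$ ($p$ even) whose even-order derivatives ($\le p$) vanish at $0$ and odd-order derivatives ($\le p$) vanish at $1$. $X^{p,r,2}_{i,j}=\int_0^1(N^p_{i,2})^{(r)}(N^p_{j,2})^{(r)}\,\mathrm{d}x$. With $\alpha_k=0$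 for $k>p$: $(T_n^{\bm\alpha})_{i,j}=\alpha_{|i-j|}$ and $(H_n^{\bm\alpha,2,1})_{i,j}=-\alpha_{i+j}+\alpha_{2n+1-i-j}$. *)

theory Defs
  imports "HOL-Analysis.Analysis"
begin

fun cardinal_bspline :: "nat \<Rightarrow> real \<Rightarrow> real" where
  "cardinal_bspline 0 t = (if 0 \<le> t \<and> t < 1 then 1 else 0)"
| "cardinal_bspline (Suc p) t =
     t / real (Suc p) * cardinal_bspline p t
     + (real (Suc p) + 1 - t) / real (Suc p) * cardinal_bspline p (t - 1)"

definition bspline_D :: "nat \<Rightarrow> nat \<Rightarrow> real \<Rightarrow> real \<Rightarrow> real" where
  "bspline_D p n c x =
     cardinal_bspline p ((2 * real n + 1) / 2 * x - c + (real p + 1) / 2)"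

text \<open>Mixed-boundary basis function N^p_{i,2} (defined on all reals; used on [0,1]).
  The sum over m in Z is an (in fact locally finite) infinite sum.\<close>
definition mixed_basis :: "nat \<Rightarrow> nat \<Rightarrow> nat \<Rightarrow> real \<Rightarrow> real" where
  "mixed_basis p n i x =
     (\<Sum>\<^sub>\<infinity>m::int. (-1::real) ^ nat \<bar>m\<bar> *
        (bspline_D p n (real i + real_of_int m * (2 * real n + 1)) x
         - bspline_D p n (- real i + real_of_int m * (2 * real n + 1)) x))"

definition nth_deriv :: "nat \<Rightarrow> (real \<Rightarrow> real) \<Rightarrow> real \<Rightarrow> real" where
  "nth_deriv r f = (deriv ^^ r) f"

definition X_mat :: "nat \<Rightarrow> nat \<Rightarrow> nat \<Rightarrow> nat \<Rightarrow> nat \<Rightarrow> real" where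
  "X_mat p r n i j =
     integral {0..1} (\<lambda>x. nth_deriv r (mixed_basis p n i) x * nth_deriv r (mixed_basis p n j) x)"

definition alpha_coef :: "nat \<Rightarrow> nat \<Rightarrow> nat \<Rightarrow> real" where
  "alpha_coef p r k =
     (if k \<le> p then (-1) ^ r * nth_deriv (2 * r) (cardinal_bspline (2 * p + 1)) (real p + 1 - real k)
      else 0)"

definition toeplitz_T :: "(nat \<Rightarrow> real) \<Rightarrow> nat \<Rightarrow> nat \<Rightarrow> real" where
  "toeplitz_T \<alpha> i j = \<alpha> (if i \<le> j then j - i else i - j)"

definition hankel_H :: "(nat \<Rightarrow> real) \<Rightarrow> nat \<Rightarrow> nat \<Rightarrow> nat \<Rightarrow> real" where
  "hankel_H \<alpha> n i j = - \<alpha> (i + j) + \<alpha> (2 * n + 1 - i - j)"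

end

theory Submission
  imports Defs
begin

text \<open>On [0, 1] only the terms m = -1, 0, 1 of the series defining N_{i,2} are non-zero, so
  N_{i,2} is a finite combination of translates of the B-spline N_p. The r-th derivative of N_q is
  the r-fold backward difference of N_{q-r}; hence, off a countable set,
  (N_{i,2})^(r)(x) = s^r u_i(s x) with s = (2n + 1)/2, where u_i is a combination of four
  translates of the centred difference F(z) = (D^r N_{p-r})(z + (p + 1)/2), D f(t) = f(t) - f(t - 1).
  The parity F(-z) = (-1)^r F(z) folds the integral of u_i u_j over [0, s] onto the whole line,
  where it becomes a combination of autocorrelations Gamma(d) = int F(y) F(y + d) dy at integers d.
  Since N_a * N_b = N_{a+b+1} and N_q is symmetric, Gamma(d) = (-1)^r D^{2r} N_{2p-2r+1}(p + 1 - d),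
  which is alpha_|d| because the 2r-th derivative of N_{2p+1} is D^{2r} N_{2p+1-2r}. The substitution
  y = s x contributes the factor s^{2r-1}.\<close>

section \<open>B-splines and their derivatives\<close>

text \<open>Unlike cardinal_bspline, the degree-0 spline takes the value 1/2 at its jumps. From degree 1
  on the two agree, but only this version is symmetric about (q + 1)/2 in every degree, which is
  needed because the derivative order r may equal p.\<close>

fun bspline :: "nat \<Rightarrow> real \<Rightarrow> real" where
  "bspline 0 t = (if 0 < t \<and> t < 1 then 1 else if t = 0 \<or> t = 1 then 1/2 else 0)"
| "bspline (Suc q) t =
     t / real (Suc q) * bspline q t + (real (Suc q) + 1 - t) / real (Suc q) * bspline q (t - 1)"

lemma bspline_1: "bspline 1 t = max 0 (1 - \<bar>t - 1\<bar>)"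
  by (auto simp: max_def abs_if)

lemma cardinal_bspline_1: "cardinal_bspline 1 t = max 0 (1 - \<bar>t - 1\<bar>)"
  by (auto simp: max_def abs_if)

lemma cardinal_bspline_eq_bspline: "q \<ge> 1 \<Longrightarrow> cardinal_bspline q = bspline q"
proof (induction q rule: nat_induct_at_least)
  case base
  show ?case by (rule ext) (simp only: bspline_1 cardinal_bspline_1)
next
  case (Suc q)
  show ?case by (rule ext) (simp only: cardinal_bspline.simps bspline.simps Suc.IH)
qed

lemma bspline_eq_0: "t < 0 \<or> t > real q + 1 \<Longrightarrow> bspline q t = 0"
  by (induction q arbitrary: t) auto

lemma bspline_eq_0_closed: "q \<ge> 1 \<Longrightarrow> t \<le> 0 \<or> t \<ge> real q + 1 \<Longrightarrow> bspline q t = 0"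
proof (induction q arbitrary: t rule: nat_induct_at_least)
  case base
  then show ?case by (auto simp: bspline_1)
qed auto

lemma bspline_nonneg: "0 \<le> bspline q t"
proof (induction q arbitrary: t)
  case (Suc q)
  have "0 \<le> t / real (Suc q) * bspline q t"
    using Suc.IH[of t] bspline_eq_0[of t q] by (cases "t < 0") simp_all
  moreover have "0 \<le> (real (Suc q) + 1 - t) / real (Suc q) * bspline q (t - 1)"
    using Suc.IH[of "t - 1"] bspline_eq_0[of "t - 1" q] by (cases "t - 1 > real q + 1") simp_all
  ultimately show ?case by simp
qed simp

lemma bspline_le: "bspline q t \<le> 4 ^ q"
proof (induction q arbitrary: t)
  case (Suc q)
  have term_le: "c * bspline q u \<le> 2 * 4 ^ q" if "u < 0 \<or> u > real q + 1 \<or> 0 \<le> c \<and> c \<le> 2" for c u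
  proof (cases "u < 0 \<or> u > real q + 1")
    case False
    then have "0 \<le> c" "c \<le> 2" using that by auto
    then show ?thesis using Suc.IH[of u] bspline_nonneg[of q u] by (metis mult_mono zero_le_numeral zero_le_power)
  qed (simp add: bspline_eq_0)
  have "t / real (Suc q) * bspline q t \<le> 2 * 4 ^ q"
    by (rule term_le) (auto simp: field_simps)
  moreover have "(real (Suc q) + 1 - t) / real (Suc q) * bspline q (t - 1) \<le> 2 * 4 ^ q"
    by (rule term_le) (auto simp: field_simps)
  ultimately show ?case by (simp add: bspline.simps(2))
qed simp

lemma bspline_symmetric: "bspline q (real q + 1 - t) = bspline q t"
proof (induction q arbitrary: t)
  case (Suc q)
  have "bspline q (real (Suc q) + 1 - t) = bspline q (t - 1)"
    using Suc.IH[of "t - 1"] by (simp add: algebra_simps)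
  moreover have "bspline q (real (Suc q) + 1 - t - 1) = bspline q t"
    using Suc.IH[of t] by (simp add: algebra_simps)
  ultimately show ?case by (simp only: bspline.simps) (simp add: algebra_simps)
qed auto

lemma borel_measurable_bspline [measurable]: "bspline q \<in> borel_measurable borel"
  by (induction q) (simp_all, measurable)

lemma integrable_on_bounded_borel:
  fixes f :: "real \<Rightarrow> real"
  assumes "f \<in> borel_measurable borel" "\<And>x. \<bar>f x\<bar> \<le> B"
  shows "f integrable_on {a..b}"
proof -
  have "f absolutely_integrable_on {a..b}"
  proof (rule measurable_bounded_by_integrable_imp_absolutely_integrable[where g="\<lambda>_. B"])
    show "f \<in> borel_measurable (lebesgue_on {a..b})"
      using assms(1) by (intro measurable_restrict_space1 measurable_completion) simp
  qed (use assms(2) in auto)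
  then show ?thesis using absolutely_integrable_on_def by blast
qed

lemma bspline_integrable_on: "bspline q integrable_on {a..b}"
  by (rule integrable_on_bounded_borel[of _ "4 ^ q"])
     (use bspline_le bspline_nonneg in \<open>auto simp: abs_le_iff intro: order_trans[of _ 0]\<close>)

declare bspline.simps(2) [simp del]

lemma bspline_0_has_derivative:
  assumes "t \<notin> \<int>"
  shows "(bspline 0 has_real_derivative 0) (at t)"
proof -
  have "t \<noteq> 0" "t \<noteq> 1" using assms by auto
  then consider "t < 0" | "0 < t \<and> t < 1" | "t > 1" by linarith
  then show ?thesis
  proof cases
    case 1
    show ?thesis
      by (rule has_field_derivative_transform_within_open[of "\<lambda>_. 0" 0 t "{..<0}"]) (use 1 in auto)
  next
    case 2
    show ?thesis
      by (rule has_field_derivative_transform_within_open[of "\<lambda>_. 1" 0 t "{0<..<1}"]) (use 2 in auto)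
  next
    case 3
    show ?thesis
      by (rule has_field_derivative_transform_within_open[of "\<lambda>_. 0" 0 t "{1<..}"]) (use 3 in auto)
  qed
qed

text \<open>Away from the integers the derivative formula follows from the recursion by induction;
  at the integers it needs the integral representation below.\<close>

lemma bspline_has_derivative_nonint:
  assumes "t \<notin> \<int>"
  shows "(bspline (Suc q) has_real_derivative (bspline q t - bspline q (t - 1))) (at t)"
  using assms
proof (induction q arbitrary: t)
  case 0
  have "t - 1 \<notin> \<int>" using "0.prems" by (metis Ints_1 Ints_add diff_add_cancel)
  then have d1: "((\<lambda>x. bspline 0 (x - 1)) has_real_derivative 0) (at t)"
    using bspline_0_has_derivative DERIV_shift[of "bspline 0" 0 t "-1"] by simp
  have "((\<lambda>t. t / 1 * bspline 0 t + (1 + 1 - t) / 1 * bspline 0 (t - 1))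
     has_real_derivative (1 * bspline 0 t + t * 0 + (-1) * bspline 0 (t - 1) + (2 - t) * 0)) (at t)"
    by (rule derivative_eq_intros bspline_0_has_derivative[OF "0.prems"] d1 refl | simp)+
  then show ?case
    by (simp add: bspline.simps(2)[abs_def])
next
  case (Suc q)
  have t1: "t - 1 \<notin> \<int>" using Suc.prems by (metis Ints_1 Ints_add diff_add_cancel)
  have d1: "((\<lambda>x. bspline (Suc q) (x - 1)) has_real_derivative
                   (bspline q (t - 1) - bspline q (t - 1 - 1))) (at t)"
    using Suc.IH[OF t1] DERIV_shift[of "bspline (Suc q)" _ t "-1"] by simp
  define P where "P = real (Suc q)"
  have rec: "bspline (Suc (Suc q)) =
      (\<lambda>t. (t * bspline (Suc q) t + (P + 1 + 1 - t) * bspline (Suc q) (t - 1)) / (P + 1))"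
    by (rule ext) (simp add: bspline.simps(2)[of "Suc q"] P_def add_divide_distrib)
  have "((\<lambda>t. t * bspline (Suc q) t + (P + 1 + 1 - t) * bspline (Suc q) (t - 1)) has_real_derivative
         1 * bspline (Suc q) t + t * (bspline q t - bspline q (t - 1))
         + (-1) * bspline (Suc q) (t - 1) + (P + 1 + 1 - t) * (bspline q (t - 1) - bspline q (t - 1 - 1)))
         (at t)"
    by (rule derivative_eq_intros Suc.IH[OF Suc.prems] d1 refl | simp)+
  then have "(bspline (Suc (Suc q)) has_real_derivative
         (1 * bspline (Suc q) t + t * (bspline q t - bspline q (t - 1))
          + (-1) * bspline (Suc q) (t - 1) + (P + 1 + 1 - t) * (bspline q (t - 1) - bspline q (t - 1 - 1)))
         / (P + 1)) (at t)"
    unfolding rec by (rule DERIV_cdivide)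
  moreover have "bspline (Suc q) u = u / P * bspline q u + (P + 1 - u) / P * bspline q (u - 1)" for u
    by (simp add: bspline.simps(2) P_def)
  moreover have "(1 * (t / P * a + (P + 1 - t) / P * b) + t * (a - b)
        + (-1) * ((t - 1) / P * b + (P + 1 - (t - 1)) / P * c) + ((P + 1) + 1 - t) * (b - c)) / (P + 1)
      = (t / P * a + (P + 1 - t) / P * b) - ((t - 1) / P * b + (P + 1 - (t - 1)) / P * c)" for a b c
    by (simp add: P_def divide_simps) (simp add: algebra_simps)
  ultimately show ?case by simp
qed

lemma isCont_bspline_Suc: "isCont (bspline (Suc q)) t"
proof (induction q arbitrary: t)
  case 0
  have "bspline (Suc 0) = (\<lambda>t. max 0 (1 - \<bar>t - 1\<bar>))" using bspline_1 by fastforce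
  then show ?case by (simp add: continuous_intros)
next
  case (Suc q)
  have "isCont (\<lambda>t. bspline (Suc q) (t - 1)) t"
    by (rule isCont_o2[OF _ Suc.IH]) (intro continuous_intros)
  then show ?case
    unfolding bspline.simps(2)[of "Suc q", abs_def] by (intro continuous_intros Suc.IH) simp_all
qed

lemma isCont_bspline_nonint: "t \<notin> \<int> \<Longrightarrow> isCont (bspline q) t"
  by (cases q) (auto intro: isCont_bspline_Suc DERIV_isCont bspline_0_has_derivative)

lemma integral_upto_has_derivative:
  fixes f :: "real \<Rightarrow> real"
  assumes "f integrable_on {a..b}" "a < x" "x < b" "isCont f x"
  shows "((\<lambda>u. integral {a..u} f) has_real_derivative f x) (at x)"
proof -
  have "((\<lambda>u. integral {a..u} f) has_vector_derivative f x) (at x within {a..b})"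
    using integral_has_vector_derivative_continuous_at[of f a b x "{}"] assms
    by (auto intro: continuous_at_imp_continuous_at_within)
  then show ?thesis
    using assms(2,3) by (simp add: at_within_Icc_at has_real_derivative_iff_has_vector_derivative)
qed

lemma window_integral_eq_diff:
  fixes f :: "real \<Rightarrow> real"
  assumes "\<And>a b. f integrable_on {a..b}" "a \<le> y - 1"
  shows "integral {y - 1..y} f = integral {a..y} f - integral {a..y - 1} f"
  using Henstock_Kurzweil_Integration.integral_combine[of a "y - 1" y f] assms by simp

lemma window_integral_has_derivative:
  fixes f :: "real \<Rightarrow> real"
  assumes int: "\<And>a b. f integrable_on {a..b}" and cont: "isCont f t" "isCont f (t - 1)"
  shows "((\<lambda>y. integral {y - 1..y} f) has_real_derivative f t - f (t - 1)) (at t)"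
proof -
  define I where "I u = integral {t - 5..u} f" for u
  have "(I has_real_derivative f t) (at t)"
    unfolding I_def by (rule integral_upto_has_derivative[OF int, of "t - 5" t "t + 5"]) (use cont in auto)
  moreover have "(I has_real_derivative f (t - 1)) (at (t - 1))"
    unfolding I_def by (rule integral_upto_has_derivative[OF int, of "t - 5" "t - 1" "t + 5"])
      (use cont in auto)
  then have "((\<lambda>x. I (x - 1)) has_real_derivative f (t - 1)) (at t)"
    using DERIV_shift[of I _ t "-1"] by simp
  ultimately have "((\<lambda>y. I y - I (y - 1)) has_real_derivative f t - f (t - 1)) (at t)"
    by (intro derivative_intros)
  then show ?thesis
    by (rule has_field_derivative_transform_within_open[of _ _ _ "{t - 1<..<t + 1}"])
       (auto simp: I_def window_integral_eq_diff[OF int, of "t - 5"])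
qed

lemma isCont_window_integral:
  fixes f :: "real \<Rightarrow> real"
  assumes int: "\<And>a b. f integrable_on {a..b}"
  shows "isCont (\<lambda>y. integral {y - 1..y} f) t"
proof -
  define I where "I u = integral {t - 5..u} f" for u
  have "continuous_on {t - 5..t + 5} I"
    unfolding I_def by (rule indefinite_integral_continuous_1[OF int])
  then have "continuous_on {t - 5<..<t + 5} I"
    by (rule continuous_on_subset) auto
  then have "isCont I t" "isCont I (t - 1)"
    by (auto simp: continuous_on_eq_continuous_at)
  moreover have "isCont (\<lambda>y. I (y - 1)) t"
    using isCont_o2[where f="\<lambda>y. y - 1" and g=I and a=t] \<open>isCont I (t - 1)\<close> by (simp add: continuous_intros)
  ultimately have "isCont (\<lambda>y. I y - I (y - 1)) t"
    by (intro continuous_intros)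
  moreover have "eventually (\<lambda>y. integral {y - 1..y} f = I y - I (y - 1)) (nhds t)"
    using eventually_nhds_in_open[of "{t - 1<..<t + 1}" t]
    by (auto elim!: eventually_mono simp: I_def window_integral_eq_diff[OF int, of "t - 5"])
  ultimately show ?thesis by (simp add: isCont_cong)
qed

text \<open>Both sides vanish far to the left and have the same derivative off the integers.\<close>

lemma bspline_Suc_eq_window_integral: "bspline (Suc q) y = integral {y - 1..y} (bspline q)"
proof -
  define H where "H y = bspline (Suc q) y - integral {y - 1..y} (bspline q)" for y
  define S where "S = {-2<..<real q + 4}"
  define K where "K = (of_int ` {-2..int q + 4} :: real set)"
  have "continuous_on S H"
    unfolding H_def
    by (intro continuous_at_imp_continuous_on ballI continuous_intros isCont_bspline_Suc
              isCont_window_integral bspline_integrable_on)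
  moreover have "DERIV H y :> 0" if y: "y \<in> S - K" for y
  proof -
    have "y \<notin> \<int>"
    proof
      assume "y \<in> \<int>"
      then obtain k where "y = of_int k" by (auto elim: Ints_cases)
      then show False using y by (auto simp: S_def K_def)
    qed
    moreover have "y - 1 \<notin> \<int>" using \<open>y \<notin> \<int>\<close> by (metis Ints_1 Ints_add diff_add_cancel)
    ultimately have "(H has_real_derivative
                       (bspline q y - bspline q (y - 1)) - (bspline q y - bspline q (y - 1))) (at y)"
      unfolding H_def[abs_def]
      by (intro derivative_intros bspline_has_derivative_nonint window_integral_has_derivative
                isCont_bspline_nonint bspline_integrable_on)
    then show ?thesis by simp
  qed
  ultimately obtain c where c: "\<And>y. y \<in> S \<Longrightarrow> H y = c"
    using DERIV_zero_connected_constant[of S K H] by (auto simp: S_def K_def)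
  have "H y = 0" if "y \<le> -1 \<or> y \<ge> real q + 4" for y
  proof -
    have "integral {y - 1..y} (bspline q) = integral {y - 1..y} (\<lambda>_. 0)"
      by (rule integral_cong) (use that in \<open>auto intro!: bspline_eq_0\<close>)
    moreover have "bspline (Suc q) y = 0" by (rule bspline_eq_0) (use that in auto)
    ultimately show ?thesis by (simp add: H_def)
  qed
  then have "H y = 0" for y
    using c[of y] c[of "-1"] by (cases "y \<in> S") (auto simp: S_def)
  then show ?thesis by (simp add: H_def)
qed

lemma bspline_Suc_has_derivative:
  assumes "q \<ge> 1 \<or> t \<notin> \<int>"
  shows "(bspline (Suc q) has_real_derivative (bspline q t - bspline q (t - 1))) (at t)"
proof (cases "t \<in> \<int>")
  case True
  then obtain q' where q: "q = Suc q'" using assms by (cases q) auto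
  have "bspline (Suc q) = (\<lambda>y. integral {y - 1..y} (bspline q))"
    using bspline_Suc_eq_window_integral by blast
  then show ?thesis
    unfolding q by (simp only:) (intro window_integral_has_derivative bspline_integrable_on isCont_bspline_Suc)
qed (rule bspline_has_derivative_nonint)
section \<open>Backward differences\<close>

definition bdiff :: "(real \<Rightarrow> real) \<Rightarrow> real \<Rightarrow> real" where
  "bdiff f t = f t - f (t - 1)"

lemma bdiff_pow_Suc: "(bdiff ^^ Suc k) f t = (bdiff ^^ k) f t - (bdiff ^^ k) f (t - 1)"
  by (simp add: bdiff_def)

lemma bdiff_pow_Suc_right: "(bdiff ^^ Suc k) f = (bdiff ^^ k) (bdiff f)"
  by (simp only: funpow_Suc_right o_def)

lemma bdiff_pow_has_derivative:
  assumes "\<And>j. j \<le> k \<Longrightarrow> (f has_real_derivative f' (t - real j)) (at (t - real j))"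
  shows "((bdiff ^^ k) f has_real_derivative (bdiff ^^ k) f' t) (at t)"
  using assms
proof (induction k arbitrary: t)
  case (Suc k)
  have "((bdiff ^^ k) f has_real_derivative (bdiff ^^ k) f' t) (at t)"
    by (rule Suc.IH) (use Suc.prems in auto)
  moreover have "((bdiff ^^ k) f has_real_derivative (bdiff ^^ k) f' (t - 1)) (at (t - 1))"
  proof (rule Suc.IH)
    fix j assume "j \<le> k"
    then show "(f has_real_derivative f' (t - 1 - real j)) (at (t - 1 - real j))"
      using Suc.prems[of "Suc j"] by (simp add: algebra_simps)
  qed
  then have "((\<lambda>x. (bdiff ^^ k) f (x - 1)) has_real_derivative (bdiff ^^ k) f' (t - 1)) (at t)"
    using DERIV_shift[of "(bdiff ^^ k) f" _ t "-1"] by simp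
  ultimately show ?case
    unfolding bdiff_pow_Suc[abs_def] by (intro derivative_intros)
qed simp

lemma bdiff_pow_bspline_has_derivative:
  assumes "q \<ge> 1 \<or> t \<notin> \<int>"
  shows "((bdiff ^^ k) (bspline (Suc q)) has_real_derivative (bdiff ^^ Suc k) (bspline q) t) (at t)"
  unfolding bdiff_pow_Suc_right
proof (rule bdiff_pow_has_derivative)
  fix j
  have "q \<ge> 1 \<or> t - real j \<notin> \<int>" using assms by (metis Ints_of_nat Ints_add diff_add_cancel)
  then show "(bspline (Suc q) has_real_derivative bdiff (bspline q) (t - real j)) (at (t - real j))"
    unfolding bdiff_def by (rule bspline_Suc_has_derivative)
qed

lemma higher_deriv_bspline: "k < q \<Longrightarrow> (deriv ^^ k) (bspline q) = (bdiff ^^ k) (bspline (q - k))"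
proof (induction k)
  case (Suc k)
  then obtain m where m: "q - k = Suc m" "m \<ge> 1" by (cases "q - k") auto
  have "(deriv ^^ Suc k) (bspline q) = deriv ((bdiff ^^ k) (bspline (Suc m)))"
    using Suc by (simp add: m)
  also have "\<dots> = (bdiff ^^ Suc k) (bspline m)"
    by (intro ext DERIV_imp_deriv bdiff_pow_bspline_has_derivative) (use m in auto)
  also have "m = q - Suc k" using m by simp
  finally show ?case .
qed simp

lemma bdiff_pow_bspline_eq_0:
  "t < 0 \<or> t > real q + real k + 1 \<Longrightarrow> (bdiff ^^ k) (bspline q) t = 0"
  by (induction k arbitrary: t) (auto simp: bdiff_def bspline_eq_0)

lemma bdiff_pow_bspline_eq_0_nonpos: "q \<ge> 1 \<Longrightarrow> t \<le> 0 \<Longrightarrow> (bdiff ^^ k) (bspline q) t = 0"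
  by (induction k arbitrary: t) (auto simp: bdiff_def bspline_eq_0_closed)

lemma bdiff_pow_bspline_symmetric:
  "(bdiff ^^ k) (bspline q) (real q + real k + 1 - t) = (-1) ^ k * (bdiff ^^ k) (bspline q) t"
proof (induction k arbitrary: t)
  case (Suc k)
  have "(bdiff ^^ k) (bspline q) (real q + real (Suc k) + 1 - t) = (-1) ^ k * (bdiff ^^ k) (bspline q) (t - 1)"
    using Suc.IH[of "t - 1"] by (simp add: algebra_simps)
  moreover have "(bdiff ^^ k) (bspline q) (real q + real (Suc k) + 1 - t - 1) = (-1) ^ k * (bdiff ^^ k) (bspline q) t"
    using Suc.IH[of t] by (simp add: algebra_simps)
  ultimately show ?case by (simp only: bdiff_pow_Suc) (simp add: algebra_simps)
qed (simp add: bspline_symmetric)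

lemma has_real_derivative_compose_affine:
  assumes "(f has_real_derivative D) (at (s * x + b))"
  shows "((\<lambda>x. f (s * x + b)) has_real_derivative s * D) (at x)"
proof -
  have "((\<lambda>x. s * x + b) has_real_derivative s) (at x)"
    by (auto intro!: derivative_eq_intros)
  from DERIV_chain2[OF assms this] show ?thesis by (simp add: mult.commute)
qed

section \<open>Bounded functions of compact support\<close>

definition bdd_compact_supp :: "(real \<Rightarrow> real) \<Rightarrow> bool" where
  "bdd_compact_supp f \<longleftrightarrow>
     f \<in> borel_measurable borel \<and> (\<exists>B. \<forall>x. \<bar>f x\<bar> \<le> B) \<and> (\<exists>R. \<forall>x. R < \<bar>x\<bar> \<longrightarrow> f x = 0)"

lemma bdd_compact_suppI:
  assumes "f \<in> borel_measurable borel" "\<And>x. \<bar>f x\<bar> \<le> B" "\<And>x. R < \<bar>x\<bar> \<Longrightarrow> f x = 0"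
  shows "bdd_compact_supp f"
  using assms unfolding bdd_compact_supp_def by blast

lemma bdd_compact_suppE:
  assumes "bdd_compact_supp f"
  obtains B R where "f \<in> borel_measurable borel" "\<And>x. \<bar>f x\<bar> \<le> B" "\<And>x. R < \<bar>x\<bar> \<Longrightarrow> f x = 0"
  using assms unfolding bdd_compact_supp_def by blast

lemma bdd_compact_supp_bspline: "bdd_compact_supp (bspline q)"
proof (rule bdd_compact_suppI[of _ "4 ^ q" "real q + 1"])
  show "\<bar>bspline q x\<bar> \<le> 4 ^ q" for x using bspline_le[of q x] bspline_nonneg[of q x] by simp
qed (auto intro: bspline_eq_0)

lemma bdd_compact_supp_shift: "bdd_compact_supp f \<Longrightarrow> bdd_compact_supp (\<lambda>x. f (x + c))"
proof (elim bdd_compact_suppE)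
  fix B R assume "f \<in> borel_measurable borel" "\<And>x. \<bar>f x\<bar> \<le> B" "\<And>x. R < \<bar>x\<bar> \<Longrightarrow> f x = 0"
  then show ?thesis by (intro bdd_compact_suppI[of _ B "R + \<bar>c\<bar>"]) (measurable, auto)
qed

lemma bdd_compact_supp_reflect: "bdd_compact_supp f \<Longrightarrow> bdd_compact_supp (\<lambda>x. f (c - x))"
proof (elim bdd_compact_suppE)
  fix B R assume "f \<in> borel_measurable borel" "\<And>x. \<bar>f x\<bar> \<le> B" "\<And>x. R < \<bar>x\<bar> \<Longrightarrow> f x = 0"
  then show ?thesis by (intro bdd_compact_suppI[of _ B "R + \<bar>c\<bar>"]) (measurable, auto)
qed

lemma bdd_compact_supp_mult:
  "bdd_compact_supp f \<Longrightarrow> bdd_compact_supp g \<Longrightarrow> bdd_compact_supp (\<lambda>x. f x * g x)"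
proof (elim bdd_compact_suppE)
  fix B R B' R'
  assume f: "f \<in> borel_measurable borel" "\<And>x. \<bar>f x\<bar> \<le> B" "\<And>x. R < \<bar>x\<bar> \<Longrightarrow> f x = 0"
    and g: "g \<in> borel_measurable borel" "\<And>x. \<bar>g x\<bar> \<le> B'"
  have "\<bar>f x * g x\<bar> \<le> B * B'" for x
    using f(2)[of x] g(2)[of x] by (simp add: abs_mult mult_mono')
  then show ?thesis using f g by (intro bdd_compact_suppI[of _ "B * B'" R]) (measurable, auto)
qed

lemma bdd_compact_supp_add:
  "bdd_compact_supp f \<Longrightarrow> bdd_compact_supp g \<Longrightarrow> bdd_compact_supp (\<lambda>x. f x + g x)"
proof (elim bdd_compact_suppE)
  fix B R B' R'
  assume "f \<in> borel_measurable borel" "\<And>x. \<bar>f x\<bar> \<le> B" "\<And>x. R < \<bar>x\<bar> \<Longrightarrow> f x = 0"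
    and "g \<in> borel_measurable borel" "\<And>x. \<bar>g x\<bar> \<le> B'" "\<And>x. R' < \<bar>x\<bar> \<Longrightarrow> g x = 0"
  moreover have "\<bar>f x + g x\<bar> \<le> B + B'" for x
    using abs_triangle_ineq[of "f x" "g x"] \<open>\<bar>f x\<bar> \<le> B\<close> \<open>\<bar>g x\<bar> \<le> B'\<close> by linarith
  ultimately show ?thesis
    by (intro bdd_compact_suppI[of _ "B + B'" "max R R'"]) (measurable, auto)
qed

lemma bdd_compact_supp_cmult: "bdd_compact_supp f \<Longrightarrow> bdd_compact_supp (\<lambda>x. c * f x)"
proof (elim bdd_compact_suppE)
  fix B R
  assume "f \<in> borel_measurable borel" "\<And>x. \<bar>f x\<bar> \<le> B" "\<And>x. R < \<bar>x\<bar> \<Longrightarrow> f x = 0"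
  then show ?thesis
    by (intro bdd_compact_suppI[of _ "\<bar>c\<bar> * B" R]) (measurable, auto simp: abs_mult mult_left_mono)
qed

lemma bdd_compact_supp_diff:
  "bdd_compact_supp f \<Longrightarrow> bdd_compact_supp g \<Longrightarrow> bdd_compact_supp (\<lambda>x. f x - g x)"
  using bdd_compact_supp_add[of f "\<lambda>x. (-1) * g x"] bdd_compact_supp_cmult[of g "-1"] by simp

lemma bdd_compact_supp_bdiff_pow: "bdd_compact_supp f \<Longrightarrow> bdd_compact_supp ((bdiff ^^ k) f)"
proof (induction k)
  case (Suc k)
  have "(bdiff ^^ Suc k) f = (\<lambda>x. (bdiff ^^ k) f x - (bdiff ^^ k) f (x + (-1)))"
    by (simp add: bdiff_def fun_eq_iff)
  then show ?case
    using Suc by (simp only:) (intro bdd_compact_supp_diff bdd_compact_supp_shift; simp)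
qed simp

lemma bdd_compact_supp_integrable_on: "bdd_compact_supp f \<Longrightarrow> f integrable_on {a..b}"
  by (metis integrable_on_bounded_borel bdd_compact_suppE)

lemma has_integral_UNIV_vanishing_outside:
  fixes f :: "real \<Rightarrow> real"
  assumes "f integrable_on {a..b}" "\<And>x. x \<notin> {a..b} \<Longrightarrow> f x = 0"
  shows "(f has_integral integral {a..b} f) UNIV"
proof -
  have "f = (\<lambda>x. if x \<in> {a..b} then f x else 0)" using assms(2) by auto
  then show ?thesis using assms(1) has_integral_restrict_UNIV[of "{a..b}" f] by (metis has_integral_integral)
qed

lemma bdd_compact_supp_integrable_on_UNIV:
  assumes "bdd_compact_supp f"
  shows "f integrable_on UNIV"
proof -
  obtain B R where "\<And>x. R < \<bar>x\<bar> \<Longrightarrow> f x = 0" using assms by (metis bdd_compact_suppE)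
  then show ?thesis
    using has_integral_UNIV_vanishing_outside[OF bdd_compact_supp_integrable_on[OF assms], of "-R" R]
    by (force simp: integrable_on_def)
qed

lemma bdd_compact_supp_integral_UNIV:
  assumes "bdd_compact_supp f" "\<And>x. x \<notin> {a..b} \<Longrightarrow> f x = 0"
  shows "integral UNIV f = integral {a..b} f"
  by (rule integral_unique[OF has_integral_UNIV_vanishing_outside])
     (use bdd_compact_supp_integrable_on[OF assms(1)] assms(2) in auto)

lemma bdd_compact_supp_integral_shift:
  assumes "bdd_compact_supp f"
  shows "integral UNIV (\<lambda>x. f (x + c)) = integral UNIV f"
proof -
  obtain B R where R: "\<And>x. R < \<bar>x\<bar> \<Longrightarrow> f x = 0" using assms by (metis bdd_compact_suppE)
  have "((\<lambda>x. f (x + c)) has_integral integral {-R..R} f) {-R - c..R - c}"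
    by (rule has_integral_shift_real_ivl) (use bdd_compact_supp_integrable_on[OF assms] in blast)
  moreover have "integral UNIV f = integral {-R..R} f"
    by (rule bdd_compact_supp_integral_UNIV[OF assms]) (use R in auto)
  moreover have "integral UNIV (\<lambda>x. f (x + c)) = integral {-R - c..R - c} (\<lambda>x. f (x + c))"
    by (rule bdd_compact_supp_integral_UNIV[OF bdd_compact_supp_shift[OF assms]]) (use R in auto)
  ultimately show ?thesis by (simp add: integral_unique)
qed

lemma bdd_compact_supp_integral_diff:
  "bdd_compact_supp f \<Longrightarrow> bdd_compact_supp g \<Longrightarrow>
     integral UNIV (\<lambda>x. f x - g x) = integral UNIV f - integral UNIV g"
  by (rule integral_diff) (auto intro: bdd_compact_supp_integrable_on_UNIV)

lemma integral_reflect_shift_real: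
  fixes g :: "real \<Rightarrow> real"
  assumes "g integrable_on {c - b..c - a}"
  shows "integral {a..b} (\<lambda>y. g (c - y)) = integral {c - b..c - a} g"
proof -
  have "((\<lambda>x. g (x + c)) has_integral integral {c - b..c - a} g) {- b..- a}"
    using has_integral_shift_real_ivl[of g _ "c - b" "c - a" c] assms
    by (simp add: has_integral_integral)
  from has_integral_reflect_real[THEN iffD2, OF this] show ?thesis
    by (simp add: integral_unique algebra_simps)
qed

section \<open>Autocorrelation of B-splines\<close>

lemma bspline_Suc_has_integral_window: "(bspline q has_integral bspline (Suc q) y) {y - 1..y}"
  using bspline_integrable_on[of q "y - 1" y] bspline_Suc_eq_window_integral[of q y]
  by (simp add: has_integral_iff)

lemma bspline_0_eq: "x \<notin> {0, 1} \<Longrightarrow> bspline 0 x = (if x \<in> {0..1} then 1 else 0)"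
  by auto

lemma bspline_conv_0_right_has_integral:
  "((\<lambda>x. bspline q x * bspline 0 (y - x)) has_integral bspline (Suc q) y) UNIV"
proof (rule has_integral_spike_finite[of "{y - 1, y}"])
  show "((\<lambda>x. if x \<in> {y - 1..y} then bspline q x else 0) has_integral bspline (Suc q) y) UNIV"
    by (rule has_integral_restrict_UNIV[THEN iffD2, OF bspline_Suc_has_integral_window])
qed (auto simp: bspline_0_eq)

lemma bspline_conv_0_left_has_integral:
  "((\<lambda>u. bspline 0 u * bspline q (y - u)) has_integral bspline (Suc q) y) UNIV"
proof (rule has_integral_spike_finite[of "{0, 1}"])
  have "((\<lambda>x. bspline q (x + y)) has_integral bspline (Suc q) y) {y - 1 - y..y - y}"
    by (rule has_integral_shift_real_ivl[OF bspline_Suc_has_integral_window])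
  then have "((\<lambda>x. bspline q (x + y)) has_integral bspline (Suc q) y) {-1..0}" by simp
  from has_integral_reflect_real[THEN iffD2, OF this[unfolded neg_0_equal_iff_equal[symmetric]]]
  have "((\<lambda>u. bspline q (y - u)) has_integral bspline (Suc q) y) {0..1}" by simp
  then show "((\<lambda>u. if u \<in> {0..1} then bspline q (y - u) else 0) has_integral bspline (Suc q) y) UNIV"
    by (rule has_integral_restrict_UNIV[THEN iffD2])
qed (auto simp: bspline_0_eq)

lemma nn_integral_bspline_conv_0_left:
  "(\<integral>\<^sup>+u. ennreal (bspline 0 u * bspline q (y - u)) \<partial>lborel) = ennreal (bspline (Suc q) y)"
  by (rule nn_integral_has_integral_lborel[OF _ _ bspline_conv_0_left_has_integral])
     (auto intro: bspline_nonneg)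

text \<open>Peel off a degree-0 factor from the second B-spline and use Tonelli.\<close>

lemma nn_integral_bspline_conv:
  "(\<integral>\<^sup>+x. ennreal (bspline a x * bspline b (y - x)) \<partial>lborel) = ennreal (bspline (Suc (a + b)) y)"
proof (induction b arbitrary: y)
  case 0
  have "(\<integral>\<^sup>+x. ennreal (bspline a x * bspline 0 (y - x)) \<partial>lborel) = ennreal (bspline (Suc a) y)"
    by (rule nn_integral_has_integral_lborel[OF _ _ bspline_conv_0_right_has_integral])
       (auto intro: bspline_nonneg)
  then show ?case by simp
next
  case (Suc b)
  have "(\<integral>\<^sup>+x. ennreal (bspline a x * bspline (Suc b) (y - x)) \<partial>lborel)
      = (\<integral>\<^sup>+x. (\<integral>\<^sup>+u. ennreal (bspline a x) * ennreal (bspline 0 u * bspline b (y - x - u)) \<partial>lborel) \<partial>lborel)"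
    by (intro nn_integral_cong)
       (simp add: nn_integral_bspline_conv_0_left[symmetric] ennreal_mult' bspline_nonneg
                  nn_integral_cmult)
  also have "\<dots> = (\<integral>\<^sup>+u. (\<integral>\<^sup>+x. ennreal (bspline a x) * ennreal (bspline 0 u * bspline b (y - x - u)) \<partial>lborel) \<partial>lborel)"
    by (subst lborel_pair.Fubini') (auto simp: case_prod_unfold cong: measurable_cong_sets)
  also have "\<dots> = (\<integral>\<^sup>+u. ennreal (bspline 0 u) * (\<integral>\<^sup>+x. ennreal (bspline a x * bspline b (y - u - x)) \<partial>lborel) \<partial>lborel)"
  proof (intro nn_integral_cong)
    fix u :: real
    have "(\<integral>\<^sup>+x. ennreal (bspline a x) * ennreal (bspline 0 u * bspline b (y - x - u)) \<partial>lborel)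
        = (\<integral>\<^sup>+x. ennreal (bspline 0 u) * ennreal (bspline a x * bspline b (y - u - x)) \<partial>lborel)"
      by (intro nn_integral_cong) (simp add: ennreal_mult'[symmetric] bspline_nonneg algebra_simps)
    also have "\<dots> = ennreal (bspline 0 u) * (\<integral>\<^sup>+x. ennreal (bspline a x * bspline b (y - u - x)) \<partial>lborel)"
      by (rule nn_integral_cmult) measurable
    finally show "(\<integral>\<^sup>+x. ennreal (bspline a x) * ennreal (bspline 0 u * bspline b (y - x - u)) \<partial>lborel)
        = ennreal (bspline 0 u) * (\<integral>\<^sup>+x. ennreal (bspline a x * bspline b (y - u - x)) \<partial>lborel)" .
  qed
  also have "\<dots> = (\<integral>\<^sup>+u. ennreal (bspline 0 u * bspline (Suc (a + b)) (y - u)) \<partial>lborel)"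
    by (intro nn_integral_cong, subst Suc.IH, simp only: ennreal_mult'[OF bspline_nonneg])
  also have "\<dots> = ennreal (bspline (Suc (Suc (a + b))) y)"
    by (rule nn_integral_bspline_conv_0_left)
  finally show ?case by simp
qed

lemma bspline_conv_has_integral:
  "((\<lambda>x. bspline a x * bspline b (y - x)) has_integral bspline (Suc (a + b)) y) UNIV"
  by (rule nn_integral_has_integral[OF _ _ nn_integral_bspline_conv])
     (auto intro: mult_nonneg_nonneg bspline_nonneg)

lemma integral_bdiff_autocorr:
  assumes E: "bdd_compact_supp E"
  defines "A \<equiv> \<lambda>d. integral UNIV (\<lambda>y. E y * E (y + d))"
  shows "integral UNIV (\<lambda>y. bdiff E y * bdiff E (y + d)) = 2 * A d - A (d - 1) - A (d + 1)"
proof -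
  have E2: "bdd_compact_supp (\<lambda>y. E (y + a) * E (y + b))" for a b
    by (intro bdd_compact_supp_mult bdd_compact_supp_shift E)
  have shift: "integral UNIV (\<lambda>y. E (y + a) * E (y + b)) = A (b - a)" for a b
    using bdd_compact_supp_integral_shift[OF E2[of 0 "b - a"], of a] by (simp add: A_def algebra_simps)
  have "(\<lambda>y. bdiff E y * bdiff E (y + d)) =
        (\<lambda>y. (E (y + 0) * E (y + d) - E (y + 0) * E (y + (d - 1)))
             - (E (y + -1) * E (y + d) - E (y + -1) * E (y + (d - 1))))"
    by (simp add: bdiff_def algebra_simps fun_eq_iff)
  then show ?thesis
    by (simp only: bdd_compact_supp_integral_diff bdd_compact_supp_diff E2 shift) simp
qed

lemma bdiff_pow_bspline_autocorr:
  "integral UNIV (\<lambda>y. (bdiff ^^ r) (bspline q) y * (bdiff ^^ r) (bspline q) (y + d))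
     = (-1) ^ r * (bdiff ^^ (2 * r)) (bspline (2 * q + 1)) (real q + real r + 1 - d)"
proof (induction r arbitrary: d)
  case 0
  have "(\<lambda>x. bspline q x * bspline q (real q + 1 - d - x)) = (\<lambda>y. bspline q y * bspline q (y + d))"
    using bspline_symmetric[of q "_ + d"] by (simp add: algebra_simps)
  with bspline_conv_has_integral[of q q "real q + 1 - d"] show ?case
    by (simp add: integral_unique mult_2)
next
  case (Suc r)
  define A where "A e = integral UNIV (\<lambda>y. (bdiff ^^ r) (bspline q) y * (bdiff ^^ r) (bspline q) (y + e))" for e
  define K where "K = (bdiff ^^ (2 * r)) (bspline (2 * q + 1))"
  define t where "t = real q + real (Suc r) + 1 - d"
  have "integral UNIV (\<lambda>y. (bdiff ^^ Suc r) (bspline q) y * (bdiff ^^ Suc r) (bspline q) (y + d))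
      = 2 * A d - A (d - 1) - A (d + 1)"
    unfolding A_def funpow.simps(2) o_apply
    by (intro integral_bdiff_autocorr bdd_compact_supp_bdiff_pow bdd_compact_supp_bspline)
  also have "\<dots> = (-1) ^ Suc r * ((K t - K (t - 1)) - (K (t - 1) - K (t - 1 - 1)))"
    unfolding A_def Suc.IH K_def[symmetric] by (simp add: t_def algebra_simps)
  also have "(K t - K (t - 1)) - (K (t - 1) - K (t - 1 - 1)) = (bdiff ^^ (2 * Suc r)) (bspline (2 * q + 1)) t"
    unfolding K_def by (simp add: bdiff_def)
  finally show ?case unfolding t_def .
qed

section \<open>Higher derivatives of combinations of B-splines\<close>

context
  fixes p :: nat and s :: real and T :: "'i set" and w b1 b2 :: "'i \<Rightarrow> real"
begin

definition spline_comb :: "real \<Rightarrow> real" where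
  "spline_comb x = (\<Sum>m\<in>T. w m * (bspline p (s * x + b1 m) - bspline p (s * x + b2 m)))"

definition spline_comb_deriv :: "nat \<Rightarrow> real \<Rightarrow> real" where
  "spline_comb_deriv k x = s ^ k *
     (\<Sum>m\<in>T. w m * ((bdiff ^^ k) (bspline (p - k)) (s * x + b1 m)
                     - (bdiff ^^ k) (bspline (p - k)) (s * x + b2 m)))"

lemma spline_comb_deriv_has_derivative:
  assumes "Suc k \<le> p" "Suc k < p \<or> (\<forall>m\<in>T. s * x + b1 m \<notin> \<int> \<and> s * x + b2 m \<notin> \<int>)"
  shows "(spline_comb_deriv k has_real_derivative spline_comb_deriv (Suc k) x) (at x)"
proof -
  obtain q where q: "p - k = Suc q" "p - Suc k = q" using assms(1) by (cases "p - k") auto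
  have affine_term: "((\<lambda>x. (bdiff ^^ k) (bspline (p - k)) (s * x + b)) has_real_derivative
                s * (bdiff ^^ Suc k) (bspline (p - Suc k)) (s * x + b)) (at x)"
    if "Suc k < p \<or> s * x + b \<notin> \<int>" for b
    unfolding q
    by (intro has_real_derivative_compose_affine bdiff_pow_bspline_has_derivative) (use that q in auto)
  have "(spline_comb_deriv k has_real_derivative s ^ k *
          (\<Sum>m\<in>T. w m * (s * (bdiff ^^ Suc k) (bspline (p - Suc k)) (s * x + b1 m)
                          - s * (bdiff ^^ Suc k) (bspline (p - Suc k)) (s * x + b2 m)))) (at x)"
    unfolding spline_comb_deriv_def[abs_def]
    by (intro DERIV_cmult DERIV_sum DERIV_diff affine_term) (use assms(2) in auto)
  then show ?thesis
    by (simp add: spline_comb_deriv_def sum_distrib_left right_diff_distrib mult_ac)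
qed

lemma higher_deriv_spline_comb_below: "k < p \<Longrightarrow> (deriv ^^ k) spline_comb = spline_comb_deriv k"
proof (induction k)
  case 0
  then show ?case by (simp add: spline_comb_deriv_def[abs_def] spline_comb_def[abs_def])
next
  case (Suc k)
  then have "(deriv ^^ Suc k) spline_comb = deriv (spline_comb_deriv k)" by simp
  also have "\<dots> = spline_comb_deriv (Suc k)"
    by (intro ext DERIV_imp_deriv spline_comb_deriv_has_derivative) (use Suc.prems in auto)
  finally show ?case .
qed

lemma higher_deriv_spline_comb:
  assumes "k \<le> p" "\<forall>m\<in>T. s * x + b1 m \<notin> \<int> \<and> s * x + b2 m \<notin> \<int>"
  shows "(deriv ^^ k) spline_comb x = spline_comb_deriv k x"
proof (cases "k < p")
  case False
  then have k: "k = p" using assms(1) by simp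
  show ?thesis
  proof (cases p)
    case 0
    show ?thesis unfolding spline_comb_deriv_def spline_comb_def using k 0 by simp
  next
    case (Suc j)
    have "(deriv ^^ k) spline_comb x = deriv (spline_comb_deriv j) x"
      using higher_deriv_spline_comb_below[of j] by (simp add: k Suc)
    also have "\<dots> = spline_comb_deriv (Suc j) x"
      by (intro DERIV_imp_deriv spline_comb_deriv_has_derivative) (simp_all add: Suc assms(2))
    finally show ?thesis using k Suc by simp
  qed
qed (simp add: higher_deriv_spline_comb_below)

end
section \<open>Folding integrals over a half period\<close>

lemma integral_folded_product:
  fixes f g :: "real \<Rightarrow> real" and \<epsilon> s :: real
  assumes f: "bdd_compact_supp f" and g: "bdd_compact_supp g" and "0 \<le> s" and \<epsilon>: "\<epsilon> * \<epsilon> = 1"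
  shows "integral {0..s} (\<lambda>y. (f y + \<epsilon> * f (2 * s - y)) * (g y + \<epsilon> * g (2 * s - y)))
       = integral {0..2 * s} (\<lambda>y. f y * g y) + \<epsilon> * integral {0..2 * s} (\<lambda>y. f y * g (2 * s - y))"
proof -
  define L where "L = 2 * s"
  have fg: "bdd_compact_supp (\<lambda>y. f y * g y)" and fg': "bdd_compact_supp (\<lambda>y. f y * g (L - y))"
    and f'g': "bdd_compact_supp (\<lambda>y. f (L - y) * g (L - y))" and f'g: "bdd_compact_supp (\<lambda>y. f (L - y) * g y)"
    by (intro bdd_compact_supp_mult bdd_compact_supp_reflect f g)+
  have int: "\<And>\<phi>. bdd_compact_supp \<phi> \<Longrightarrow> \<phi> integrable_on {0..s}"
    by (rule bdd_compact_supp_integrable_on)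
  have "(\<lambda>y. (f y + \<epsilon> * f (L - y)) * (g y + \<epsilon> * g (L - y)))
      = (\<lambda>y. (f y * g y + f (L - y) * g (L - y)) + \<epsilon> * (f y * g (L - y) + f (L - y) * g y))"
  proof
    fix y
    have "(f y + \<epsilon> * f (L - y)) * (g y + \<epsilon> * g (L - y))
        = f y * g y + (\<epsilon> * \<epsilon>) * (f (L - y) * g (L - y)) + \<epsilon> * (f y * g (L - y) + f (L - y) * g y)"
      by (simp add: algebra_simps)
    then show "(f y + \<epsilon> * f (L - y)) * (g y + \<epsilon> * g (L - y))
        = (f y * g y + f (L - y) * g (L - y)) + \<epsilon> * (f y * g (L - y) + f (L - y) * g y)"
      by (simp add: \<epsilon>)
  qed
  then have "integral {0..s} (\<lambda>y. (f y + \<epsilon> * f (L - y)) * (g y + \<epsilon> * g (L - y)))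
      = (integral {0..s} (\<lambda>y. f y * g y) + integral {0..s} (\<lambda>y. f (L - y) * g (L - y)))
        + \<epsilon> * (integral {0..s} (\<lambda>y. f y * g (L - y)) + integral {0..s} (\<lambda>y. f (L - y) * g y))"
    by (simp add: integral_add integral_mult_right int bdd_compact_supp_add bdd_compact_supp_cmult
                  fg fg' f'g' f'g)
  also have "integral {0..s} (\<lambda>y. f (L - y) * g (L - y)) = integral {s..L} (\<lambda>y. f y * g y)"
    using integral_reflect_shift_real[of "\<lambda>y. f y * g y" L s 0] bdd_compact_supp_integrable_on[OF fg]
    by (simp add: L_def)
  also have "integral {0..s} (\<lambda>y. f (L - y) * g y) = integral {s..L} (\<lambda>y. f y * g (L - y))"
    using integral_reflect_shift_real[of "\<lambda>y. f y * g (L - y)" L s 0] bdd_compact_supp_integrable_on[OF fg']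
    by (simp add: L_def)
  also have "integral {0..s} (\<lambda>y. f y * g y) + integral {s..L} (\<lambda>y. f y * g y) = integral {0..L} (\<lambda>y. f y * g y)"
    by (rule Henstock_Kurzweil_Integration.integral_combine)
       (use assms(3) bdd_compact_supp_integrable_on[OF fg] in \<open>auto simp: L_def\<close>)
  also have "integral {0..s} (\<lambda>y. f y * g (L - y)) + integral {s..L} (\<lambda>y. f y * g (L - y))
      = integral {0..L} (\<lambda>y. f y * g (L - y))"
    by (rule Henstock_Kurzweil_Integration.integral_combine)
       (use assms(3) bdd_compact_supp_integrable_on[OF fg'] in \<open>auto simp: L_def\<close>)
  finally show ?thesis by (simp add: L_def)
qed

lemma integral_even_half:
  fixes \<phi> :: "real \<Rightarrow> real"
  assumes \<phi>: "bdd_compact_supp \<phi>" and even: "\<And>y. \<phi> (- y) = \<phi> y"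
    and vanish: "\<And>y. L < \<bar>y\<bar> \<Longrightarrow> \<phi> y = 0" and "0 \<le> L"
  shows "integral {0..L} \<phi> = integral UNIV \<phi> / 2"
proof -
  have "integral UNIV \<phi> = integral {-L..L} \<phi>"
    by (rule bdd_compact_supp_integral_UNIV[OF \<phi>]) (use vanish in auto)
  also have "\<dots> = integral {-L..0} \<phi> + integral {0..L} \<phi>"
    by (rule Henstock_Kurzweil_Integration.integral_combine[symmetric])
       (use assms(4) bdd_compact_supp_integrable_on[OF \<phi>] in auto)
  also have "integral {-L..0} \<phi> = integral {0..L} \<phi>"
    using Henstock_Kurzweil_Integration.integral_reflect_real[of L 0 \<phi>] by (simp add: even)
  finally show ?thesis by simp
qed

locale symmetric_bump =
  fixes F :: "real \<Rightarrow> real" and \<epsilon> h :: real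
  assumes bdd_compact_supp: "bdd_compact_supp F"
    and parity: "\<And>z. F (- z) = \<epsilon> * F z"
    and sign_square: "\<epsilon> * \<epsilon> = 1"
    and vanishes: "\<And>z. h < \<bar>z\<bar> \<Longrightarrow> F z = 0"
begin

definition autocorr :: "real \<Rightarrow> real" where
  "autocorr d = integral UNIV (\<lambda>y. F y * F (y + d))"

definition pair_diff :: "real \<Rightarrow> real \<Rightarrow> real" where
  "pair_diff a y = F (y - a) - F (y + a)"

lemma bdd_compact_supp_translate: "bdd_compact_supp (\<lambda>y. F (y - a))"
  using bdd_compact_supp_shift[OF bdd_compact_supp, of "-a"] by simp

lemma integral_shifts_eq_autocorr: "integral UNIV (\<lambda>y. F (y - a) * F (y - b)) = autocorr (a - b)"
proof -
  have "bdd_compact_supp (\<lambda>z. F z * F (z + (a - b)))"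
    by (intro bdd_compact_supp_mult bdd_compact_supp_shift bdd_compact_supp)
  from bdd_compact_supp_integral_shift[OF this, of "- a"] show ?thesis
    by (simp add: autocorr_def algebra_simps)
qed

lemma autocorr_minus: "autocorr (- d) = autocorr d"
  using integral_shifts_eq_autocorr[of 0 d] integral_shifts_eq_autocorr[of d 0]
  by (simp add: mult.commute)

lemma integral_shift_diffs_eq_autocorr:
  "integral UNIV (\<lambda>y. (F (y - a1) - F (y - a2)) * (F (y - b1) - F (y - b2)))
     = autocorr (a1 - b1) - autocorr (a1 - b2) - autocorr (a2 - b1) + autocorr (a2 - b2)"
proof -
  have "(\<lambda>y. (F (y - a1) - F (y - a2)) * (F (y - b1) - F (y - b2)))
     = (\<lambda>y. (F (y - a1) * F (y - b1) - F (y - a1) * F (y - b2))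
           - (F (y - a2) * F (y - b1) - F (y - a2) * F (y - b2)))"
    by (simp add: fun_eq_iff algebra_simps)
  then show ?thesis
    by (simp add: bdd_compact_supp_integral_diff bdd_compact_supp_diff bdd_compact_supp_mult
                  bdd_compact_supp_translate integral_shifts_eq_autocorr)
qed

lemma bdd_compact_supp_pair_diff: "bdd_compact_supp (pair_diff a)"
  unfolding pair_diff_def[abs_def]
  using bdd_compact_supp_diff[OF bdd_compact_supp_translate[of a] bdd_compact_supp_translate[of "-a"]] by simp

lemma pair_diff_minus: "pair_diff a (- y) = - \<epsilon> * pair_diff a y"
proof -
  have "F (- y - a) = \<epsilon> * F (y + a)" using parity[of "y + a"] by simp
  moreover have "F (- y + a) = \<epsilon> * F (y - a)" using parity[of "y - a"] by simp
  ultimately show ?thesis unfolding pair_diff_def by (simp add: algebra_simps)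
qed

lemma pair_diff_eq_0: "h + \<bar>a\<bar> < \<bar>y\<bar> \<Longrightarrow> pair_diff a y = 0"
  unfolding pair_diff_def by (subst vanishes, arith)+ simp

lemma integral_pair_diff_product:
  "integral UNIV (\<lambda>y. pair_diff a y * pair_diff b y)
     = autocorr (a - b) - autocorr (a - - b) - autocorr (- a - b) + autocorr (- a - - b)"
  using integral_shift_diffs_eq_autocorr[of a "- a" b "- b"] by (simp add: pair_diff_def)

lemma integral_pair_diff_reflected_product:
  "integral UNIV (\<lambda>y. pair_diff a y * pair_diff b (L - y)) = \<epsilon> *
     (autocorr (a - (L - b)) - autocorr (a - (L + b)) - autocorr (- a - (L - b)) + autocorr (- a - (L + b)))"
proof -
  have "pair_diff b (L - y) = \<epsilon> * (F (y - (L - b)) - F (y - (L + b)))" for y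
    using parity[of "y - (L - b)"] parity[of "y - (L + b)"] by (simp add: pair_diff_def algebra_simps)
  then have "(\<lambda>y. pair_diff a y * pair_diff b (L - y))
      = (\<lambda>y. \<epsilon> * ((F (y - a) - F (y - - a)) * (F (y - (L - b)) - F (y - (L + b)))))"
    by (simp add: fun_eq_iff pair_diff_def)
  then show ?thesis by (simp only: integral_mult_right integral_shift_diffs_eq_autocorr)
qed

text \<open>On [0, s] only one of the two translates in pair_diff (2s - a) is non-zero, and the parity of F
  moves it to the reflected point 2s - y.\<close>

lemma pair_diff_reflect:
  assumes "h < s + 1/2" "1 \<le> a" "a \<le> s - 1/2" "y \<in> {0..s}"
  shows "pair_diff (2 * s - a) y = \<epsilon> * pair_diff a (2 * s - y)"
proof -
  have "F (y + (2 * s - a)) = 0" "F (y - 2 * s - a) = 0"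
    by (rule vanishes, use assms in auto)+
  moreover have "F (2 * s - y - a) = \<epsilon> * F (y - (2 * s - a))"
    using parity[of "y - (2 * s - a)"] by (simp add: algebra_simps)
  moreover have "F (2 * s - y + a) = \<epsilon> * F (y - 2 * s - a)"
    using parity[of "y - 2 * s - a"] by (simp add: algebra_simps)
  ultimately show ?thesis
    by (simp add: pair_diff_def right_diff_distrib mult.assoc[symmetric] sign_square)
qed

lemma integral_folded_pair_diff:
  assumes h: "0 \<le> h" "h < s + 1/2" and ij: "1 \<le> i" "i \<le> s - 1/2" "1 \<le> j" "j \<le> s - 1/2"
    and L: "L = 2 * s"
  shows "integral {0..s} (\<lambda>y. (pair_diff i y + pair_diff (L - i) y) * (pair_diff j y + pair_diff (L - j) y))
    = (autocorr (i - j) - autocorr (i - - j) - autocorr (- i - j) + autocorr (- i - - j)) / 2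
      + (autocorr (i - (L - j)) - autocorr (i - (L + j)) - autocorr (- i - (L - j)) + autocorr (- i - (L + j)))"
proof -
  define f where "f = pair_diff i"
  define g where "g = pair_diff j"
  have f: "bdd_compact_supp f" and g: "bdd_compact_supp g"
    unfolding f_def g_def by (rule bdd_compact_supp_pair_diff)+
  have fg: "bdd_compact_supp (\<lambda>y. f y * g y)" by (rule bdd_compact_supp_mult[OF f g])
  have f0: "f y = 0" and g0: "g y = 0" if "L < \<bar>y\<bar>" for y
    unfolding f_def g_def by (rule pair_diff_eq_0, use that h ij L in auto)+
  have "integral {0..s} (\<lambda>y. (pair_diff i y + pair_diff (L - i) y) * (pair_diff j y + pair_diff (L - j) y))
      = integral {0..s} (\<lambda>y. (f y + \<epsilon> * f (2 * s - y)) * (g y + \<epsilon> * g (2 * s - y)))"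
    by (intro integral_cong) (simp add: f_def g_def L pair_diff_reflect h ij)
  also have "\<dots> = integral {0..L} (\<lambda>y. f y * g y) + \<epsilon> * integral {0..L} (\<lambda>y. f y * g (L - y))"
    using integral_folded_product[OF f g _ sign_square, of s] ij L by simp
  also have "integral {0..L} (\<lambda>y. f y * g y) = integral UNIV (\<lambda>y. f y * g y) / 2"
  proof (rule integral_even_half[OF fg])
    fix y
    have "f (- y) * g (- y) = (\<epsilon> * \<epsilon>) * (f y * g y)"
      by (simp add: f_def g_def pair_diff_minus algebra_simps)
    then show "f (- y) * g (- y) = f y * g y" by (simp add: sign_square)
  qed (use f0 h ij L in auto)
  also have "integral {0..L} (\<lambda>y. f y * g (L - y)) = integral UNIV (\<lambda>y. f y * g (L - y))"
  proof (rule bdd_compact_supp_integral_UNIV[symmetric])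
    show "bdd_compact_supp (\<lambda>y. f y * g (L - y))"
      by (intro bdd_compact_supp_mult bdd_compact_supp_reflect f g)
    show "f y * g (L - y) = 0" if "y \<notin> {0..L}" for y
      using that f0[of y] g0[of "L - y"] h ij L by (cases "y < 0") auto
  qed
  also have "integral UNIV (\<lambda>y. f y * g y)
      = autocorr (i - j) - autocorr (i - - j) - autocorr (- i - j) + autocorr (- i - - j)"
    unfolding f_def g_def by (rule integral_pair_diff_product)
  also have "integral UNIV (\<lambda>y. f y * g (L - y)) = \<epsilon> *
      (autocorr (i - (L - j)) - autocorr (i - (L + j)) - autocorr (- i - (L - j)) + autocorr (- i - (L + j)))"
    unfolding f_def g_def by (rule integral_pair_diff_reflected_product)
  finally show ?thesis by (simp add: mult.assoc[symmetric] sign_square)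
qed

end

section \<open>The centred differences of B-splines\<close>

definition centred_bdiff :: "nat \<Rightarrow> nat \<Rightarrow> real \<Rightarrow> real" where
  "centred_bdiff q k z = (bdiff ^^ k) (bspline q) (z + (real q + real k + 1) / 2)"

interpretation centred: symmetric_bump "centred_bdiff q k" "(-1) ^ k" "(real q + real k + 1) / 2"
  for q k
proof
  show "bdd_compact_supp (centred_bdiff q k)"
    unfolding centred_bdiff_def[abs_def]
    by (intro bdd_compact_supp_shift bdd_compact_supp_bdiff_pow bdd_compact_supp_bspline)
  show "centred_bdiff q k (- z) = (-1) ^ k * centred_bdiff q k z" for z
  proof -
    have "real q + real k + 1 - (z + (real q + real k + 1) / 2) = - z + (real q + real k + 1) / 2"
      by (simp add: field_simps)
    then show ?thesis
      using bdiff_pow_bspline_symmetric[of k q "z + (real q + real k + 1) / 2"]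
      by (simp only: centred_bdiff_def)
  qed
  show "(-1) ^ k * (-1) ^ k = (1::real)"
    by (simp flip: power_add)
  show "centred_bdiff q k z = 0" if "(real q + real k + 1) / 2 < \<bar>z\<bar>" for z
  proof -
    have "z + (real q + real k + 1) / 2 < 0 \<or> z + (real q + real k + 1) / 2 > real q + real k + 1"
      using that by (auto simp: field_simps abs_real_def split: if_splits)
    then show ?thesis unfolding centred_bdiff_def by (rule bdiff_pow_bspline_eq_0)
  qed
qed

lemma centred_autocorr:
  "centred.autocorr q k d = (-1) ^ k * (bdiff ^^ (2 * k)) (bspline (2 * q + 1)) (real q + real k + 1 - d)"
proof -
  define E where "E = (bdiff ^^ k) (bspline q)"
  have "bdd_compact_supp (\<lambda>y. E y * E (y + d))"
    unfolding E_def by (intro bdd_compact_supp_mult bdd_compact_supp_shift bdd_compact_supp_bdiff_pow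
                               bdd_compact_supp_bspline)
  from bdd_compact_supp_integral_shift[OF this, of "(real q + real k + 1) / 2"]
  show ?thesis
    by (simp add: centred.autocorr_def centred_bdiff_def E_def bdiff_pow_bspline_autocorr algebra_simps)
qed

lemma alpha_coef_eq_bdiff_pow:
  assumes "r \<le> p" "p \<ge> 1"
  shows "alpha_coef p r k = (-1) ^ r * (bdiff ^^ (2 * r)) (bspline (2 * (p - r) + 1)) (real p + 1 - real k)"
proof (cases "k \<le> p")
  case True
  have "nth_deriv (2 * r) (cardinal_bspline (2 * p + 1)) = (deriv ^^ (2 * r)) (bspline (2 * p + 1))"
    using cardinal_bspline_eq_bspline[of "2 * p + 1"] by (simp only: nth_deriv_def)
  also have "\<dots> = (bdiff ^^ (2 * r)) (bspline (2 * p + 1 - 2 * r))"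
    by (rule higher_deriv_bspline) (use assms in simp)
  also have "2 * p + 1 - 2 * r = 2 * (p - r) + 1" using assms by simp
  finally show ?thesis using True by (simp only: alpha_coef_def if_True)
next
  case False
  then show ?thesis
    using bdiff_pow_bspline_eq_0_nonpos[of "2 * (p - r) + 1" "real p + 1 - real k" "2 * r"]
    by (simp add: alpha_coef_def)
qed

lemma centred_autocorr_eq_alpha_coef:
  assumes "r \<le> p" "p \<ge> 1"
  shows "centred.autocorr (p - r) r (real k) = alpha_coef p r k"
  using assms by (simp add: centred_autocorr alpha_coef_eq_bdiff_pow of_nat_diff)

section \<open>Derivatives of the mixed basis\<close>

text \<open>bspline_D p n (c + m (2n + 1)) x is the B-spline of degree p at s x + mixed_offset p n c m,
  with s = (2n + 1)/2.\<close>

definition mixed_offset :: "nat \<Rightarrow> nat \<Rightarrow> real \<Rightarrow> int \<Rightarrow> real" where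
  "mixed_offset p n c m = (real p + 1) / 2 - (c + real_of_int m * (2 * real n + 1))"

lemma bspline_mixed_offset_eq_0:
  assumes n: "p + 1 \<le> n" and i: "1 \<le> i" "i \<le> n" and x: "x \<in> {-1/2<..<3/2}"
    and c: "c = real i \<or> c = - real i" and m: "m \<notin> {-1, 0, 1}"
  shows "bspline p ((2 * real n + 1) / 2 * x + mixed_offset p n c m) = 0"
proof (rule bspline_eq_0)
  define L where "L = 2 * real n + 1"
  have "(2 * real n + 1) / 2 * (-1/2) < (2 * real n + 1) / 2 * x"
    using x by (intro mult_strict_left_mono) auto
  moreover have "(2 * real n + 1) / 2 * x < (2 * real n + 1) / 2 * (3/2)"
    using x by (intro mult_strict_left_mono) auto
  ultimately have sx: "- real n / 2 - 1 / 4 < (2 * real n + 1) / 2 * x"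
      "(2 * real n + 1) / 2 * x < 3 * real n / 2 + 3 / 4"
    by (simp_all add: field_simps)
  have "real_of_int m * L \<ge> 2 * L \<or> real_of_int m * L \<le> -2 * L"
  proof (cases "m \<ge> 2")
    case False
    then have "m \<le> -2" using m by auto
    then show ?thesis by (intro disjI2 mult_right_mono) (auto simp: L_def)
  qed (intro disjI1 mult_right_mono, auto simp: L_def)
  then show "(2 * real n + 1) / 2 * x + mixed_offset p n c m < 0
           \<or> (2 * real n + 1) / 2 * x + mixed_offset p n c m > real p + 1"
    using sx c n i unfolding mixed_offset_def L_def[symmetric]
    by (auto simp: L_def add_divide_distrib)
qed

lemma mixed_basis_eq_spline_comb:
  assumes p: "p \<ge> 1" and n: "p + 1 \<le> n" and i: "1 \<le> i" "i \<le> n" and x: "x \<in> {-1/2<..<3/2}"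
  shows "mixed_basis p n i x =
           spline_comb p ((2 * real n + 1) / 2) {-1, 0, 1} (\<lambda>m. (-1) ^ nat \<bar>m\<bar>)
             (mixed_offset p n (real i)) (mixed_offset p n (- real i)) x"
proof -
  define f where "f m = (-1::real) ^ nat \<bar>m\<bar> *
        (bspline_D p n (real i + real_of_int m * (2 * real n + 1)) x
         - bspline_D p n (- real i + real_of_int m * (2 * real n + 1)) x)" for m :: int
  have D: "bspline_D p n (c + real_of_int m * (2 * real n + 1)) x
         = bspline p ((2 * real n + 1) / 2 * x + mixed_offset p n c m)" for c m
    by (simp add: bspline_D_def mixed_offset_def cardinal_bspline_eq_bspline[OF p] algebra_simps)
  have "mixed_basis p n i x = infsum f UNIV" unfolding mixed_basis_def f_def ..
  also have "\<dots> = infsum f {-1, 0, 1}"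
  proof (rule infsum_cong_neutral)
    show "f m = 0" if "m \<in> UNIV - {-1, 0, 1}" for m
      unfolding f_def D
      using bspline_mixed_offset_eq_0[OF n i x _, of "real i" m] bspline_mixed_offset_eq_0[OF n i x _, of "- real i" m] that
      by simp
  qed auto
  also have "\<dots> = spline_comb p ((2 * real n + 1) / 2) {-1, 0, 1} (\<lambda>m. (-1) ^ nat \<bar>m\<bar>)
                    (mixed_offset p n (real i)) (mixed_offset p n (- real i)) x"
    unfolding f_def D spline_comb_def by simp
  finally show ?thesis .
qed

text \<open>All offsets differ from (p + 1)/2 by integers, so a single non-integrality condition
  keeps every translate away from the breakpoints.\<close>

lemma nth_deriv_mixed_basis:
  fixes p n r i :: nat and x :: real
  defines "s \<equiv> (2 * real n + 1) / 2"
  assumes p: "p \<ge> 1" and r: "r \<le> p" and n: "p + 1 \<le> n" and i: "1 \<le> i" "i \<le> n"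
    and x: "x \<in> {0..1}" and nonint: "s * x + (real p + 1) / 2 \<notin> \<int>"
  shows "nth_deriv r (mixed_basis p n i) x = s ^ r *
           (centred.pair_diff (p - r) r (real i) (s * x)
            + centred.pair_diff (p - r) r (2 * real n + 1 - real i) (s * x))"
proof -
  define E where "E = (bdiff ^^ r) (bspline (p - r))"
  have offset_nonint: "s * x + mixed_offset p n c m \<notin> \<int>" if "c = real i \<or> c = - real i" for c m
  proof
    assume "s * x + mixed_offset p n c m \<in> \<int>"
    moreover have "c + real_of_int m * (2 * real n + 1) \<in> \<int>" using that by auto
    ultimately have "(s * x + mixed_offset p n c m) + (c + real_of_int m * (2 * real n + 1)) \<in> \<int>"
      by (rule Ints_add)
    then show False using nonint by (simp add: mixed_offset_def)
  qed
  have "nth_deriv r (mixed_basis p n i) x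
      = (deriv ^^ r) (spline_comb p s {-1, 0, 1} (\<lambda>m. (-1) ^ nat \<bar>m\<bar>)
                        (mixed_offset p n (real i)) (mixed_offset p n (- real i))) x"
    unfolding nth_deriv_def s_def
    using eventually_nhds_in_open[of "{-1/2<..<3/2}" x] x
    by (intro higher_deriv_cong_ev) (auto elim!: eventually_mono intro: mixed_basis_eq_spline_comb[OF p n i])
  also have "\<dots> = spline_comb_deriv p s {-1, 0, 1} (\<lambda>m. (-1) ^ nat \<bar>m\<bar>)
                    (mixed_offset p n (real i)) (mixed_offset p n (- real i)) r x"
    by (rule higher_deriv_spline_comb[OF r]) (use offset_nonint in blast)
  also have "\<dots> = s ^ r * (E (s * x - real i + (real p + 1) / 2) - E (s * x + real i + (real p + 1) / 2)
      + E (s * x - (2 * real n + 1 - real i) + (real p + 1) / 2)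
      - E (s * x + (2 * real n + 1 - real i) + (real p + 1) / 2))"
  proof -
    have sx: "0 \<le> s * x" "s * x \<le> s" using x by (auto simp: s_def)
    have "E (s * x + mixed_offset p n (real i) 1) = 0"
      unfolding E_def using sx n i
      by (intro bdiff_pow_bspline_eq_0) (auto simp: s_def mixed_offset_def field_simps)
    moreover have "E (s * x + mixed_offset p n (- real i) (-1)) = 0"
      unfolding E_def using sx n i r
      by (intro bdiff_pow_bspline_eq_0) (auto simp: mixed_offset_def field_simps of_nat_diff)
    ultimately show ?thesis
      by (simp add: spline_comb_deriv_def E_def mixed_offset_def algebra_simps)
  qed
  finally show ?thesis
    by (simp add: centred.pair_diff_def centred_bdiff_def E_def algebra_simps of_nat_diff r)
qed

section \<open>The stiffness matrix\<close>

lemma negligible_affine_preimage_Ints: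
  fixes s c :: real
  assumes "s \<noteq> 0"
  shows "negligible {x. s * x + c \<in> \<int>}"
proof -
  have "{x. s * x + c \<in> \<int>} \<subseteq> (\<lambda>z. (z - c) / s) ` \<int>"
  proof
    fix x assume "x \<in> {x. s * x + c \<in> \<int>}"
    moreover have "x = ((s * x + c) - c) / s" using assms by simp
    ultimately show "x \<in> (\<lambda>z. (z - c) / s) ` \<int>" by blast
  qed
  moreover have "countable ((\<lambda>z. (z - c) / s) ` \<int>)"
    by (intro countable_image countable_int)
  ultimately have "countable {x. s * x + c \<in> \<int>}" by (rule countable_subset)
  then show ?thesis
    by (simp add: negligible_iff_null_sets null_sets_completionI countable_imp_null_set_lborel)
qed

lemma X_mat_eq_integral_folded:
  fixes p n r i j :: nat
  defines "s \<equiv> (2 * real n + 1) / 2"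
    and "u \<equiv> \<lambda>a y. centred.pair_diff (p - r) r (real a) y
                    + centred.pair_diff (p - r) r (2 * real n + 1 - real a) y"
  assumes p: "p \<ge> 1" and r: "r \<le> p" and n: "p + 1 \<le> n"
    and i: "1 \<le> i" "i \<le> n" and j: "1 \<le> j" "j \<le> n"
  shows "X_mat p r n i j = s powr (2 * real r - 1) * integral {0..s} (\<lambda>y. u i y * u j y)"
proof -
  have s0: "s > 0" by (simp add: s_def)
  have "X_mat p r n i j = integral {0..1} (\<lambda>x. (s ^ r * s ^ r) * (\<lambda>y. u i y * u j y) (s * x))"
    unfolding X_mat_def
  proof (rule integral_spike[OF negligible_affine_preimage_Ints[of s "(real p + 1) / 2"]])
    fix x assume "x \<in> {0..1} - {x. s * x + (real p + 1) / 2 \<in> \<int>}"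
    then have x: "x \<in> {0..1}" and nonint: "s * x + (real p + 1) / 2 \<notin> \<int>" by auto
    have "nth_deriv r (mixed_basis p n a) x = s ^ r * u a (s * x)" if "1 \<le> a" "a \<le> n" for a
      unfolding u_def s_def by (rule nth_deriv_mixed_basis[OF p r n that x nonint[unfolded s_def]])
    then show "s ^ r * s ^ r * (u i (s * x) * u j (s * x))
        = nth_deriv r (mixed_basis p n i) x * nth_deriv r (mixed_basis p n j) x"
      using i j by (simp only: mult_ac)
  qed (use s0 in simp)
  also have "\<dots> = (s ^ r * s ^ r) * integral {0..1} (\<lambda>x. (\<lambda>y. u i y * u j y) (s * x))"
    by (rule integral_mult_right)
  also have "integral {0..1} (\<lambda>x. (\<lambda>y. u i y * u j y) (s * x)) = integral {0..s} (\<lambda>y. u i y * u j y) / s"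
    using integral_stretch_real[where m=s and f="\<lambda>y. u i y * u j y" and a=0 and b=s] s0 by simp
  also have "s ^ r * s ^ r = s powr (2 * real r - 1) * s"
  proof -
    have "s powr (2 * real r - 1) = s powr real (2 * r) / s powr 1" by (simp add: powr_diff)
    also have "\<dots> = s ^ (2 * r) / s" using powr_realpow[OF s0, of "2 * r"] s0 by simp
    finally have "s powr (2 * real r - 1) * s = s ^ (2 * r)" using s0 by simp
    then show ?thesis by (metis mult_2 power_add)
  qed
  finally show ?thesis using s0 by simp
qed

lemma folded_autocorr_eq_toeplitz_hankel:
  fixes G :: "real \<Rightarrow> real" and \<alpha> :: "nat \<Rightarrow> real" and i j n :: nat and L :: real
  defines "L \<equiv> 2 * real n + 1"
  assumes even: "\<And>d. G (- d) = G d" and nat: "\<And>k. G (real k) = \<alpha> k"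
    and vanish: "\<And>k. p < k \<Longrightarrow> \<alpha> k = 0"
    and n: "p + 1 \<le> n" and i: "1 \<le> i" "i \<le> n" and j: "1 \<le> j" "j \<le> n"
  shows "(G (real i - real j) - G (real i - - real j) - G (- real i - real j) + G (- real i - - real j)) / 2
      + (G (real i - (L - real j)) - G (real i - (L + real j))
         - G (- real i - (L - real j)) + G (- real i - (L + real j)))
      = toeplitz_T \<alpha> i j + hankel_H \<alpha> n i j"
proof -
  have neg: "G (- real k) = \<alpha> k" for k by (simp add: even nat)
  have diff: "G (real i - real j) = toeplitz_T \<alpha> i j" "G (- real i - - real j) = toeplitz_T \<alpha> i j"
  proof -
    show "G (real i - real j) = toeplitz_T \<alpha> i j"
    proof (cases "i \<le> j")
      case True
      then have "real i - real j = - real (j - i)" by (simp add: of_nat_diff)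
      then show ?thesis using True by (simp only: neg) (simp add: toeplitz_T_def)
    next
      case False
      then have "real i - real j = real (i - j)" by (simp add: of_nat_diff)
      then show ?thesis using False by (simp only: nat) (simp add: toeplitz_T_def)
    qed
    then show "G (- real i - - real j) = toeplitz_T \<alpha> i j"
      using even[of "real i - real j"] by (simp add: algebra_simps)
  qed
  have sum: "G (real i - - real j) = \<alpha> (i + j)" "G (- real i - real j) = \<alpha> (i + j)"
    using nat[of "i + j"] neg[of "i + j"] by (simp_all add: algebra_simps)
  have "real i - (L - real j) = - real (2 * n + 1 - i - j)"
    using i j by (simp add: L_def of_nat_diff)
  then have reflected: "G (real i - (L - real j)) = \<alpha> (2 * n + 1 - i - j)" by (simp add: neg)
  have "real i - (L + real j) = - real (2 * n + 1 + j - i)"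
    and "- real i - (L - real j) = - real (2 * n + 1 + i - j)"
    and "- real i - (L + real j) = - real (2 * n + 1 + i + j)"
    using i j by (simp_all add: L_def of_nat_diff)
  then have far: "G (real i - (L + real j)) = 0" "G (- real i - (L - real j)) = 0"
    "G (- real i - (L + real j)) = 0"
    by (simp_all only: neg) (use i j n in \<open>simp_all add: vanish\<close>)
  show ?thesis unfolding diff sum reflected far hankel_H_def by simp
qed

lemma integral_folded_eq_toeplitz_hankel:
  fixes p n r i j :: nat
  defines "s \<equiv> (2 * real n + 1) / 2"
    and "u \<equiv> \<lambda>a y. centred.pair_diff (p - r) r (real a) y
                    + centred.pair_diff (p - r) r (2 * real n + 1 - real a) y"
  assumes p: "p \<ge> 1" and r: "r \<le> p" and n: "p + 1 \<le> n"
    and i: "1 \<le> i" "i \<le> n" and j: "1 \<le> j" "j \<le> n"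
  shows "integral {0..s} (\<lambda>y. u i y * u j y) = toeplitz_T (alpha_coef p r) i j + hankel_H (alpha_coef p r) n i j"
proof -
  define L where "L = 2 * real n + 1"
  define G where "G = centred.autocorr (p - r) r"
  have "integral {0..s} (\<lambda>y. u i y * u j y)
      = (G (real i - real j) - G (real i - - real j) - G (- real i - real j) + G (- real i - - real j)) / 2
        + (G (real i - (L - real j)) - G (real i - (L + real j))
           - G (- real i - (L - real j)) + G (- real i - (L + real j)))"
    unfolding u_def G_def L_def
    by (rule centred.integral_folded_pair_diff) (use i j n r in \<open>auto simp: s_def of_nat_diff field_simps\<close>)
  also have "\<dots> = toeplitz_T (alpha_coef p r) i j + hankel_H (alpha_coef p r) n i j"
    unfolding L_def
  proof (rule folded_autocorr_eq_toeplitz_hankel[OF _ _ _ n i j])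
    show "G (- d) = G d" for d unfolding G_def by (rule centred.autocorr_minus)
    show "G (real k) = alpha_coef p r k" for k
      unfolding G_def by (rule centred_autocorr_eq_alpha_coef[OF r p])
    show "alpha_coef p r k = 0" if "p < k" for k using that by (simp add: alpha_coef_def)
  qed
  finally show ?thesis .
qed

theorem mainTheorem10:
  fixes p n r :: nat
  assumes "p \<ge> 1" and "n \<ge> 1" and "r \<le> p"
    and "n \<ge> max (p + 1) (p + p div 2)"
  shows "\<forall>i\<in>{1..n}. \<forall>j\<in>{1..n}.
           X_mat p r n i j =
             ((2 * real n + 1) / 2) powr (2 * real r - 1) *
             (toeplitz_T (alpha_coef p r) i j + hankel_H (alpha_coef p r) n i j)"
proof (intro ballI)
  fix i j assume "i \<in> {1..n}" "j \<in> {1..n}"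
  then have i: "1 \<le> i" "i \<le> n" and j: "1 \<le> j" "j \<le> n" by auto
  have n: "p + 1 \<le> n" using assms(4) by simp
  show "X_mat p r n i j = ((2 * real n + 1) / 2) powr (2 * real r - 1) *
      (toeplitz_T (alpha_coef p r) i j + hankel_H (alpha_coef p r) n i j)"
    using X_mat_eq_integral_folded[OF assms(1,3) n i j]
      integral_folded_eq_toeplitz_hankel[OF assms(1,3) n i j] by simp
qed

end
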